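(* Let $\alpha>1$, $1\le m\le d$, $\mathcal{A}=\{a\in\{0,1\}^d:\|a\|_1=m\}$, let $r_1\in\mathbb{R}^d$ have i.i.d. coordinates from $\mathcal{D}_\alpha\in\{\mathcal{P}_\alpha,\mathcal{F}_\alpha\}$, and let $a_1\in\arg\min_{a\in\mathcal{A}}a^\top(-r_1)$. Then $$\mathbb{E}_{r_1\sim\mathcal{D}_\alpha}[a_1^\top r_1]\le\begin{cases}\left(\frac{\alpha}{\alpha-1}m^{1-\frac1\alpha}+\Gamma\left(1-\frac1\alpha\right)\right)(d+1)^{\frac1\alpha}, & \mathcal{D}_\alpha=\mathcal{P}_\alpha,\\[4pt] \left(\frac{\alpha}{\alpha-1}m^{1-\frac1\alpha}+\Gamma\left(1-\frac1\alpha\right)\right)(d+1)^{\frac1\alpha}+m, & \mathcal{D}_\alpha=\mathcal{F}_\alpha.\end{cases}$$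
   Context: Fréchet $\mathcal{F}_\alpha$: CDF $F(x)=e^{-1/x^\alpha}$, $x\ge0$; Pareto $\mathcal{P}_\alpha$: CDF $F(x)=1-x^{-\alpha}$, $x\ge1$. $\Gamma$ is the gamma function. ($a_1^\top r_1$ is the sum of the $m$ largest coordinates of $r_1$.) *)

theory Defs
  imports "HOL-Probability.Probability"
begin

text \<open>Pareto distribution P_alpha: CDF 1 - x^(-alpha) on x >= 1, given by its density.\<close>
definition pareto_distr :: "real \<Rightarrow> real measure" where
  "pareto_distr \<alpha> = density lborel
     (\<lambda>x. ennreal (if 1 \<le> x then \<alpha> * x powr (- \<alpha> - 1) else 0))"

text \<open>Frechet distribution F_alpha: CDF exp(-x^(-alpha)) on x >= 0, given by its density.\<close>
definition frechet_distr :: "real \<Rightarrow> real measure" where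
  "frechet_distr \<alpha> = density lborel
     (\<lambda>x. ennreal (if 0 < x then \<alpha> * x powr (- \<alpha> - 1) * exp (- (x powr (- \<alpha>))) else 0))"

definition actions :: "nat \<Rightarrow> nat \<Rightarrow> (nat \<Rightarrow> real) set" where
  "actions d m = {a. (\<forall>i<d. a i \<in> {0, 1}) \<and> (\<forall>i. i \<ge> d \<longrightarrow> a i = 0)
                     \<and> (\<Sum>i<d. a i) = real m}"

definition inner_d :: "nat \<Rightarrow> (nat \<Rightarrow> real) \<Rightarrow> (nat \<Rightarrow> real) \<Rightarrow> real" where
  "inner_d d a r = (\<Sum>i<d. a i * r i)"

definition argmin_action :: "nat \<Rightarrow> nat \<Rightarrow> (nat \<Rightarrow> real) \<Rightarrow> (nat \<Rightarrow> real)" where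
  "argmin_action d m r = (SOME a. a \<in> actions d m \<and>
      (\<forall>b\<in>actions d m. inner_d d a (\<lambda>i. - r i) \<le> inner_d d b (\<lambda>i. - r i)))"

end

theory Submission
  imports Defs "HOL-Real_Asymp.Real_Asymp"
begin

text \<open>
  For any threshold c, an action a with m unit entries satisfies
  a^T r \<le> m c + \<Sum>i<d. max (r i - c) 0. Both densities are bounded on [c, \<infinity>) by the
  Pareto density \<alpha> x powr (-\<alpha> - 1), so E (max (X - c) 0) \<le> c powr (1 - \<alpha>) / (\<alpha> - 1),
  and the expected reward of the minimiser is at most m c + d c powr (1 - \<alpha>) / (\<alpha> - 1).
  For c = (d / m) powr (1 / \<alpha>) this equals \<alpha> / (\<alpha> - 1) m powr (1 - 1 / \<alpha>) d powr (1 / \<alpha>),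
  which is already below the claimed bound: the \<Gamma>-term and the extra m in the Frechet case
  are slack.
\<close>

lemma nn_integral_excess_power_density:
  fixes \<alpha> c :: real
  assumes "\<alpha> > 1" and "c > 0"
  shows "(\<integral>\<^sup>+x\<in>{c..}. ennreal ((x - c) * (\<alpha> * x powr (- \<alpha> - 1))) \<partial>lborel)
    = ennreal (c powr (1 - \<alpha>) / (\<alpha> - 1))"
proof -
  define F where "F x = - (x - c) * x powr (- \<alpha>) - x powr (1 - \<alpha>) / (\<alpha> - 1)" for x :: real
  have "(\<integral>\<^sup>+x\<in>{c..}. ennreal ((x - c) * (\<alpha> * x powr (- \<alpha> - 1))) \<partial>lborel) = ennreal (0 - F c)"
  proof (rule nn_integral_FTC_atLeast)
    fix x :: real assume "c \<le> x"
    have "- y - \<alpha> * z * (c - x) - (1 - \<alpha>) * y / (\<alpha> - 1) = (x - c) * (\<alpha> * z)" for y z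
      using \<open>\<alpha> > 1\<close> by (simp add: field_simps)
    with \<open>c \<le> x\<close> \<open>c > 0\<close> \<open>\<alpha> > 1\<close> show "(F has_real_derivative (x - c) * (\<alpha> * x powr (- \<alpha> - 1))) (at x)"
      unfolding F_def by (auto intro!: derivative_eq_intros)
    show "0 \<le> (x - c) * (\<alpha> * x powr (- \<alpha> - 1))"
      using \<open>c \<le> x\<close> \<open>\<alpha> > 1\<close> by simp
  next
    show "(F \<longlongrightarrow> 0) at_top"
      unfolding F_def using \<open>\<alpha> > 1\<close> by real_asymp
  qed measurable
  then show ?thesis
    by (simp add: F_def)
qed

lemma nn_integral_excess_density_le:
  fixes \<alpha> c :: real and g :: "real \<Rightarrow> real"
  assumes "\<alpha> > 1" and "c > 0" and "g \<in> borel_measurable borel" and "\<And>x. 0 \<le> g x"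
    and "\<And>x. c \<le> x \<Longrightarrow> g x \<le> \<alpha> * x powr (- \<alpha> - 1)"
  shows "(\<integral>\<^sup>+x. ennreal (max (x - c) 0) \<partial>density lborel (\<lambda>x. ennreal (g x)))
    \<le> ennreal (c powr (1 - \<alpha>) / (\<alpha> - 1))"
proof -
  have "(\<integral>\<^sup>+x. ennreal (max (x - c) 0) \<partial>density lborel (\<lambda>x. ennreal (g x)))
      = (\<integral>\<^sup>+x. ennreal (g x) * ennreal (max (x - c) 0) \<partial>lborel)"
    using assms(3) by (subst nn_integral_density) auto
  also have "\<dots> \<le> (\<integral>\<^sup>+x\<in>{c..}. ennreal ((x - c) * (\<alpha> * x powr (- \<alpha> - 1))) \<partial>lborel)"
  proof (intro nn_integral_mono)
    fix x :: real
    show "ennreal (g x) * ennreal (max (x - c) 0)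
        \<le> ennreal ((x - c) * (\<alpha> * x powr (- \<alpha> - 1))) * indicator {c..} x"
    proof (cases "c \<le> x")
      case True
      then have "g x * (x - c) \<le> (x - c) * (\<alpha> * x powr (- \<alpha> - 1))"
        using mult_right_mono[OF assms(5)[OF True], of "x - c"] by (simp add: mult.commute)
      with True assms(4) show ?thesis
        by (simp add: ennreal_mult[symmetric] ennreal_leI)
    qed simp
  qed
  also have "\<dots> = ennreal (c powr (1 - \<alpha>) / (\<alpha> - 1))"
    using assms(1,2) by (rule nn_integral_excess_power_density)
  finally show ?thesis .
qed

lemma sets_pareto_distr [simp]: "sets (pareto_distr \<alpha>) = sets borel"
  by (simp add: pareto_distr_def)

lemma sets_frechet_distr [simp]: "sets (frechet_distr \<alpha>) = sets borel"
  by (simp add: frechet_distr_def)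

lemma prob_space_pareto_distr:
  assumes "\<alpha> > 0"
  shows "prob_space (pareto_distr \<alpha>)"
proof (rule prob_spaceI)
  have "emeasure (pareto_distr \<alpha>) (space (pareto_distr \<alpha>))
      = (\<integral>\<^sup>+x\<in>{1..}. ennreal (\<alpha> * x powr (- \<alpha> - 1)) \<partial>lborel)"
    unfolding pareto_distr_def
    by (subst emeasure_density) (auto intro!: nn_integral_cong simp: indicator_def)
  also have "\<dots> = ennreal (0 - (- (1 powr (- \<alpha>))))"
  proof (rule nn_integral_FTC_atLeast)
    fix x :: real assume "1 \<le> x"
    then show "((\<lambda>x. - (x powr (- \<alpha>))) has_real_derivative \<alpha> * x powr (- \<alpha> - 1)) (at x)"
      by (auto intro!: derivative_eq_intros)
    show "0 \<le> \<alpha> * x powr (- \<alpha> - 1)"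
      using assms by simp
  next
    show "((\<lambda>x. - (x powr (- \<alpha>))) \<longlongrightarrow> 0) at_top"
      using assms by real_asymp
  qed measurable
  finally show "emeasure (pareto_distr \<alpha>) (space (pareto_distr \<alpha>)) = 1"
    by simp
qed

text \<open>The case x = 0 is needed because \<open>nn_integral_FTC_atLeast\<close> asks for a two-sided
  derivative at the left end point of the integration range.\<close>

lemma frechet_cdf_has_derivative:
  fixes \<alpha> x :: real
  assumes "\<alpha> > 0" and "x \<ge> 0"
  defines "F \<equiv> \<lambda>x::real. if 0 < x then exp (- (x powr (- \<alpha>))) else 0"
  shows "(F has_real_derivative
      (if 0 < x then \<alpha> * x powr (- \<alpha> - 1) * exp (- (x powr (- \<alpha>))) else 0)) (at x)"
proof (cases "x = 0")
  case False
  with assms(2) have "x > 0" by simp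
  have "((\<lambda>x. exp (- (x powr (- \<alpha>)))) has_real_derivative
      \<alpha> * x powr (- \<alpha> - 1) * exp (- (x powr (- \<alpha>)))) (at x)"
    using \<open>x > 0\<close> by (auto intro!: derivative_eq_intros)
  then have "(F has_real_derivative \<alpha> * x powr (- \<alpha> - 1) * exp (- (x powr (- \<alpha>)))) (at x)"
    by (rule has_field_derivative_transform_within_open[where S = "{0<..}"])
      (use \<open>x > 0\<close> in \<open>auto simp: F_def\<close>)
  with \<open>x > 0\<close> show ?thesis
    by simp
next
  case True
  have "((\<lambda>y. (F y - F 0) / (y - 0)) \<longlongrightarrow> 0) (at 0)"
  proof (rule filterlim_split_at_real)
    have "eventually (\<lambda>y. 0 = (F y - F 0) / (y - 0)) (at_left 0)"
      using eventually_at_left_real[of "-1" "0::real", simplified]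
      by eventually_elim (auto simp: F_def)
    then show "((\<lambda>y. (F y - F 0) / (y - 0)) \<longlongrightarrow> 0) (at_left 0)"
      by (rule tendsto_eventually[OF eventually_mono]) simp
  next
    have "((\<lambda>y. exp (- (y powr (- \<alpha>))) / y) \<longlongrightarrow> 0) (at_right 0)"
      using assms(1) by real_asymp
    moreover have "eventually (\<lambda>y. exp (- (y powr (- \<alpha>))) / y = (F y - F 0) / (y - 0)) (at_right 0)"
      using eventually_at_right_less[of "0::real"] by eventually_elim (auto simp: F_def)
    ultimately show "((\<lambda>y. (F y - F 0) / (y - 0)) \<longlongrightarrow> 0) (at_right 0)"
      by (rule Lim_transform_eventually)
  qed
  with True show ?thesis
    by (simp add: has_field_derivative_iff)
qed

lemma prob_space_frechet_distr:
  assumes "\<alpha> > 0"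
  shows "prob_space (frechet_distr \<alpha>)"
proof (rule prob_spaceI)
  define f where "f x = (if 0 < x then \<alpha> * x powr (- \<alpha> - 1) * exp (- (x powr (- \<alpha>))) else 0)"
    for x :: real
  define F where "F x = (if 0 < x then exp (- (x powr (- \<alpha>))) else 0)" for x :: real
  have "emeasure (frechet_distr \<alpha>) (space (frechet_distr \<alpha>)) = (\<integral>\<^sup>+x\<in>{0..}. ennreal (f x) \<partial>lborel)"
    unfolding frechet_distr_def f_def
    by (subst emeasure_density) (auto intro!: nn_integral_cong simp: indicator_def)
  also have "\<dots> = ennreal (1 - F 0)"
  proof (rule nn_integral_FTC_atLeast)
    fix x :: real assume "0 \<le> x"
    show "(F has_real_derivative f x) (at x)"
      unfolding F_def f_def using assms \<open>0 \<le> x\<close> by (rule frechet_cdf_has_derivative)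
    show "0 \<le> f x"
      using assms by (simp add: f_def)
  next
    have "((\<lambda>x. exp (- (x powr (- \<alpha>)))) \<longlongrightarrow> 1) at_top"
      using assms by real_asymp
    moreover have "eventually (\<lambda>x. exp (- (x powr (- \<alpha>))) = F x) at_top"
      using eventually_gt_at_top[of 0] by eventually_elim (simp add: F_def)
    ultimately show "(F \<longlongrightarrow> 1) at_top"
      by (rule Lim_transform_eventually)
  qed (simp add: f_def)
  finally show "emeasure (frechet_distr \<alpha>) (space (frechet_distr \<alpha>)) = 1"
    by (simp add: F_def)
qed

lemma nn_integral_excess_pareto_distr_le:
  assumes "\<alpha> > 1" and "c > 0"
  shows "(\<integral>\<^sup>+x. ennreal (max (x - c) 0) \<partial>pareto_distr \<alpha>) \<le> ennreal (c powr (1 - \<alpha>) / (\<alpha> - 1))"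
  unfolding pareto_distr_def using assms by (intro nn_integral_excess_density_le) auto

lemma nn_integral_excess_frechet_distr_le:
  assumes "\<alpha> > 1" and "c > 0"
  shows "(\<integral>\<^sup>+x. ennreal (max (x - c) 0) \<partial>frechet_distr \<alpha>) \<le> ennreal (c powr (1 - \<alpha>) / (\<alpha> - 1))"
  unfolding frechet_distr_def using assms
  by (intro nn_integral_excess_density_le) (auto intro: mult_left_le)

lemma finite_actions: "finite (actions d m)"
proof (rule finite_subset)
  show "actions d m \<subseteq> {a. \<forall>i. (i \<in> {..<d} \<longrightarrow> a i \<in> {0, 1}) \<and> (i \<notin> {..<d} \<longrightarrow> a i = 0)}"
    by (auto simp: actions_def)
qed (intro finite_set_of_finite_funs; simp)

lemma indicator_prefix_in_actions: "m \<le> d \<Longrightarrow> (\<lambda>i. if i < m then 1 else 0) \<in> actions d m"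
  by (auto simp: actions_def sum.If_cases lessThan_def[symmetric] min_absorb1 Int_absorb1
      intro!: arg_cong[where f = real])

lemma argmin_action_in_actions:
  assumes "m \<le> d"
  shows "argmin_action d m r \<in> actions d m"
proof -
  let ?f = "\<lambda>a. inner_d d a (\<lambda>i. - r i)"
  let ?a = "arg_min_on ?f (actions d m)"
  have ne: "actions d m \<noteq> {}"
    using indicator_prefix_in_actions[OF assms] by blast
  have "?a \<in> actions d m"
    using finite_actions ne by (rule arg_min_if_finite(1))
  moreover have "\<forall>b\<in>actions d m. ?f ?a \<le> ?f b"
    using arg_min_least[OF finite_actions ne, where f = ?f] by blast
  ultimately have "\<exists>a. a \<in> actions d m \<and> (\<forall>b\<in>actions d m. ?f a \<le> ?f b)"
    by blast
  then show ?thesis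
    unfolding argmin_action_def by (rule someI2_ex) blast
qed

lemma inner_d_le_threshold:
  fixes c :: real
  assumes "a \<in> actions d m"
  shows "inner_d d a r \<le> real m * c + (\<Sum>i<d. max (r i - c) 0)"
proof -
  have "inner_d d a r \<le> (\<Sum>i<d. a i * c + max (r i - c) 0)"
    unfolding inner_d_def
  proof (rule sum_mono)
    fix i assume "i \<in> {..<d}"
    with assms have "a i = 0 \<or> a i = 1"
      by (auto simp: actions_def)
    then show "a i * r i \<le> a i * c + max (r i - c) 0"
      by auto
  qed
  also have "\<dots> = real m * c + (\<Sum>i<d. max (r i - c) 0)"
    using assms by (simp add: actions_def sum.distrib sum_distrib_right[symmetric])
  finally show ?thesis .
qed

lemma nn_integral_PiM_sum_components:
  fixes f :: "'a \<Rightarrow> ennreal"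
  assumes "prob_space M" and "f \<in> borel_measurable M" and "finite I"
  shows "(\<integral>\<^sup>+\<omega>. (\<Sum>i\<in>I. f (\<omega> i)) \<partial>PiM I (\<lambda>_. M)) = of_nat (card I) * (\<integral>\<^sup>+x. f x \<partial>M)"
proof -
  have component: "(\<integral>\<^sup>+\<omega>. f (\<omega> i) \<partial>PiM I (\<lambda>_. M)) = (\<integral>\<^sup>+x. f x \<partial>M)" if "i \<in> I" for i
  proof -
    have "(\<integral>\<^sup>+x. f x \<partial>M) = (\<integral>\<^sup>+x. f x \<partial>distr (PiM I (\<lambda>_. M)) M (\<lambda>\<omega>. \<omega> i))"
      using distr_PiM_component[of I "\<lambda>_. M" i] assms(1) that by simp
    also have "\<dots> = (\<integral>\<^sup>+\<omega>. f (\<omega> i) \<partial>PiM I (\<lambda>_. M))"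
      using assms(2) that by (intro nn_integral_distr) auto
    finally show ?thesis ..
  qed
  have "(\<integral>\<^sup>+\<omega>. (\<Sum>i\<in>I. f (\<omega> i)) \<partial>PiM I (\<lambda>_. M)) = (\<Sum>i\<in>I. \<integral>\<^sup>+\<omega>. f (\<omega> i) \<partial>PiM I (\<lambda>_. M))"
    using assms(2) by (intro nn_integral_sum) auto
  also have "\<dots> = of_nat (card I) * (\<integral>\<^sup>+x. f x \<partial>M)"
    using component by simp
  finally show ?thesis .
qed

lemma nn_integral_argmin_action_le:
  fixes D :: "real measure"
  assumes "prob_space D" and "sets D = sets borel" and "m \<le> d" and "c \<ge> 0"
  shows "(\<integral>\<^sup>+r. ennreal (inner_d d (argmin_action d m r) r) \<partial>PiM {..<d} (\<lambda>_. D))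
    \<le> ennreal (real m * c) + of_nat d * (\<integral>\<^sup>+x. ennreal (max (x - c) 0) \<partial>D)"
proof -
  let ?M = "PiM {..<d} (\<lambda>_. D)"
  have excess_measurable[measurable]: "(\<lambda>x. ennreal (max (x - c) 0)) \<in> borel_measurable D"
    using assms(2) by measurable
  have "(\<integral>\<^sup>+r. ennreal (inner_d d (argmin_action d m r) r) \<partial>?M)
      \<le> (\<integral>\<^sup>+r. ennreal (real m * c) + (\<Sum>i<d. ennreal (max (r i - c) 0)) \<partial>?M)"
  proof (rule nn_integral_mono)
    fix r :: "nat \<Rightarrow> real"
    have "inner_d d (argmin_action d m r) r \<le> real m * c + (\<Sum>i<d. max (r i - c) 0)"
      using argmin_action_in_actions[OF assms(3)] by (rule inner_d_le_threshold)
    then have "ennreal (inner_d d (argmin_action d m r) r)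
        \<le> ennreal (real m * c + (\<Sum>i<d. max (r i - c) 0))"
      by (rule ennreal_leI)
    also have "\<dots> = ennreal (real m * c) + (\<Sum>i<d. ennreal (max (r i - c) 0))"
      unfolding sum_ennreal[OF max.cobounded2] using assms(4)
      by (intro ennreal_plus) (auto intro: sum_nonneg)
    finally show "ennreal (inner_d d (argmin_action d m r) r)
        \<le> ennreal (real m * c) + (\<Sum>i<d. ennreal (max (r i - c) 0))" .
  qed
  also have "\<dots> = (\<integral>\<^sup>+r. ennreal (real m * c) \<partial>?M) + (\<integral>\<^sup>+r. (\<Sum>i<d. ennreal (max (r i - c) 0)) \<partial>?M)"
    by (rule nn_integral_add) measurable
  also have "(\<integral>\<^sup>+r. ennreal (real m * c) \<partial>?M) = ennreal (real m * c)"
    using assms(1) by (simp add: prob_space.emeasure_space_1 prob_space_PiM)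
  also have "(\<integral>\<^sup>+r. (\<Sum>i<d. ennreal (max (r i - c) 0)) \<partial>?M)
      = of_nat d * (\<integral>\<^sup>+x. ennreal (max (x - c) 0) \<partial>D)"
    using nn_integral_PiM_sum_components[OF assms(1) excess_measurable, of "{..<d}"]
    unfolding card_lessThan by simp
  finally show ?thesis .
qed

lemma threshold_optimum:
  fixes \<alpha> :: real and m d :: nat
  assumes "\<alpha> > 1" and "0 < m" and "0 < d"
  defines "c \<equiv> (real d / real m) powr (1 / \<alpha>)"
  shows "real m * c + real d * (c powr (1 - \<alpha>) / (\<alpha> - 1))
    = \<alpha> / (\<alpha> - 1) * real m powr (1 - 1 / \<alpha>) * real d powr (1 / \<alpha>)"
proof -
  have "c > 0"
    unfolding c_def using assms by simp
  have "c powr (- \<alpha>) = real m / real d"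
    unfolding c_def using assms by (simp add: powr_powr powr_minus_divide)
  then have "real d * c powr (1 - \<alpha>) = real m * c"
    using \<open>c > 0\<close> assms by (simp add: powr_diff powr_minus field_simps)
  moreover have "real m * c = real m powr (1 - 1 / \<alpha>) * real d powr (1 / \<alpha>)"
    unfolding c_def using assms by (simp add: powr_divide powr_diff)
  ultimately show ?thesis
    using assms(1) by (simp add: field_simps)
qed

theorem lemma9:
  fixes \<alpha> :: real and m d :: nat and D :: "real measure"
  assumes "\<alpha> > 1" and "1 \<le> m" and "m \<le> d"
    and "D = pareto_distr \<alpha> \<or> D = frechet_distr \<alpha>"
  shows "(\<integral>\<^sup>+ r. ennreal (inner_d d (argmin_action d m r) r) \<partial>(PiM {..<d} (\<lambda>_. D)))
    \<le> ennreal ((\<alpha> / (\<alpha> - 1) * real m powr (1 - 1 / \<alpha>) + Gamma (1 - 1 / \<alpha>))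
                 * real (d + 1) powr (1 / \<alpha>)
               + (if D = frechet_distr \<alpha> then real m else 0))"
proof -
  define c where "c = (real d / real m) powr (1 / \<alpha>)"
  have "c > 0"
    unfolding c_def using assms(2,3) by simp
  have "prob_space D" and "sets D = sets borel"
    and excess: "(\<integral>\<^sup>+x. ennreal (max (x - c) 0) \<partial>D) \<le> ennreal (c powr (1 - \<alpha>) / (\<alpha> - 1))"
    using assms(1,4) \<open>c > 0\<close> prob_space_pareto_distr prob_space_frechet_distr
      nn_integral_excess_pareto_distr_le nn_integral_excess_frechet_distr_le by auto
  have optimum: "real m * c + real d * (c powr (1 - \<alpha>) / (\<alpha> - 1))
      = \<alpha> / (\<alpha> - 1) * real m powr (1 - 1 / \<alpha>) * real d powr (1 / \<alpha>)"
    unfolding c_def using assms(1-3) by (intro threshold_optimum) auto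
  have "(\<integral>\<^sup>+ r. ennreal (inner_d d (argmin_action d m r) r) \<partial>(PiM {..<d} (\<lambda>_. D)))
      \<le> ennreal (real m * c) + of_nat d * (\<integral>\<^sup>+x. ennreal (max (x - c) 0) \<partial>D)"
    using \<open>prob_space D\<close> \<open>sets D = sets borel\<close> assms(3) \<open>c > 0\<close>
    by (intro nn_integral_argmin_action_le) auto
  also have "\<dots> \<le> ennreal (real m * c) + of_nat d * ennreal (c powr (1 - \<alpha>) / (\<alpha> - 1))"
    using excess by (intro add_left_mono mult_left_mono) auto
  also have "\<dots> = ennreal (real m * c + real d * (c powr (1 - \<alpha>) / (\<alpha> - 1)))"
    using \<open>c > 0\<close> assms(1)
    by (simp add: ennreal_of_nat_eq_real_of_nat ennreal_mult' ennreal_plus del: times_divide_eq_right)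
  also have "\<dots> = ennreal (\<alpha> / (\<alpha> - 1) * real m powr (1 - 1 / \<alpha>) * real d powr (1 / \<alpha>))"
    by (simp only: optimum)
  also have "\<dots> \<le> ennreal ((\<alpha> / (\<alpha> - 1) * real m powr (1 - 1 / \<alpha>) + Gamma (1 - 1 / \<alpha>))
                 * real (d + 1) powr (1 / \<alpha>)
               + (if D = frechet_distr \<alpha> then real m else 0))"
  proof (rule ennreal_leI)
    let ?K = "\<alpha> / (\<alpha> - 1) * real m powr (1 - 1 / \<alpha>)"
    have "?K * real d powr (1 / \<alpha>) \<le> ?K * real (d + 1) powr (1 / \<alpha>)"
      using assms(1) by (intro mult_left_mono powr_mono2) auto
    also have "\<dots> \<le> (?K + Gamma (1 - 1 / \<alpha>)) * real (d + 1) powr (1 / \<alpha>)"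
      using Gamma_real_pos[of "1 - 1 / \<alpha>"] assms(1) by (simp add: distrib_right)
    also have "\<dots> \<le> (?K + Gamma (1 - 1 / \<alpha>)) * real (d + 1) powr (1 / \<alpha>)
        + (if D = frechet_distr \<alpha> then real m else 0)"
      by simp
    finally show "?K * real d powr (1 / \<alpha>) \<le> \<dots>" .
  qed
  finally show ?thesis .
qed

end
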